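(* Let $A,B\in\mathcal{B}(\mathcal{H})$. Then \begin{equation*} w\left(\begin{bmatrix} 0 &A \\ B& 0 \end{bmatrix}\right)+\frac{|w(A+B)-w(A-B)|}{2}\leq w(A)+w(B). \end{equation*}
   Context: $\mathcal{H}$ is a complex Hilbert space and $\mathcal{B}(\mathcal{H})$ is the $C^*$-algebra of all bounded linear operators on $\mathcal{H}$. For $T\in\mathcal{B}(\mathcal{H})$, $w(T)=\sup\{|\langle Tx,x\rangle|:\|x\|=1\}$ is the numerical radius. A $2\times 2$ operator matrix with entries in $\mathcal{B}(\mathcal{H})$ is regarded as an operator on $\mathcal{H}\oplus\mathcal{H}$. *)

theory Defs
  imports "HOL-Analysis.Analysis"
begin

text \<open>The inner product is linear in the first and conjugate-linear in the second argument;
  the norm is the one induced by the inner product.\<close>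

class complex_inner = real_normed_vector +
  fixes scaleC :: "complex \<Rightarrow> 'a \<Rightarrow> 'a"
    and cinner :: "'a \<Rightarrow> 'a \<Rightarrow> complex"
  assumes scaleC_add_right: "scaleC a (x + y) = scaleC a x + scaleC a y"
    and scaleC_add_left: "scaleC (a + b) x = scaleC a x + scaleC b x"
    and scaleC_scaleC: "scaleC a (scaleC b x) = scaleC (a * b) x"
    and scaleC_one: "scaleC 1 x = x"
    and scaleR_scaleC: "scaleR r x = scaleC (complex_of_real r) x"
    and cinner_add_left: "cinner (x + y) z = cinner x z + cinner y z"
    and cinner_scaleC_left: "cinner (scaleC a x) y = a * cinner x y"
    and cinner_commute: "cinner x y = cnj (cinner y x)"
    and cinner_self_norm: "cinner x x = complex_of_real ((norm x)\<^sup>2)"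

class complex_hilbert = complex_inner + complete_space

instantiation prod :: (complex_inner, complex_inner) complex_inner
begin

definition scaleC_prod_def:
  "scaleC c x = (scaleC c (fst x), scaleC c (snd x))"

definition cinner_prod_def:
  "cinner x y = cinner (fst x) (fst y) + cinner (snd x) (snd y)"

instance
proof
  fix a b :: complex and x y z :: "'a \<times> 'b" and r :: real
  show "scaleC a (x + y) = scaleC a x + scaleC a y"
    by (simp add: scaleC_prod_def scaleC_add_right)
  show "scaleC (a + b) x = scaleC a x + scaleC b x"
    by (simp add: scaleC_prod_def scaleC_add_left)
  show "scaleC a (scaleC b x) = scaleC (a * b) x"
    by (simp add: scaleC_prod_def scaleC_scaleC)
  show "scaleC 1 x = x"
    by (simp add: scaleC_prod_def scaleC_one)
  show "scaleR r x = scaleC (complex_of_real r) x"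
    by (simp add: scaleC_prod_def scaleR_scaleC scaleR_prod_def)
  show "cinner (x + y) z = cinner x z + cinner y z"
    by (simp add: cinner_prod_def cinner_add_left)
  show "cinner (scaleC a x) y = a * cinner x y"
    by (simp add: cinner_prod_def scaleC_prod_def cinner_scaleC_left algebra_simps)
  show "cinner x y = cnj (cinner y x)"
    by (simp add: cinner_prod_def cinner_commute[of "fst x"] cinner_commute[of "snd x"])
  show "cinner x x = complex_of_real ((norm x)\<^sup>2)"
    by (simp add: cinner_prod_def cinner_self_norm norm_prod_def)
qed

end

instance prod :: (complex_hilbert, complex_hilbert) complex_hilbert ..

definition bounded_op :: "('a::complex_inner \<Rightarrow> 'a) \<Rightarrow> bool" where
  "bounded_op T \<longleftrightarrow>
     (\<forall>x y. T (x + y) = T x + T y) \<and>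
     (\<forall>c x. T (scaleC c x) = scaleC c (T x)) \<and>
     (\<exists>K. \<forall>x. norm (T x) \<le> norm x * K)"

text \<open>The value 0 is inserted
  so that the supremum is also meaningful (and equal to 0) for the zero space; since all
  values are nonnegative this does not change the supremum otherwise.\<close>
definition numrad :: "('a::complex_inner \<Rightarrow> 'a) \<Rightarrow> real" where
  "numrad T = Sup (insert 0 {cmod (cinner (T x) x) | x. norm x = 1})"

definition opmat2 :: "('a \<Rightarrow> 'a) \<Rightarrow> ('a \<Rightarrow> 'a) \<Rightarrow> ('a \<Rightarrow> 'a) \<Rightarrow> ('a \<Rightarrow> 'a)
    \<Rightarrow> ('a::complex_inner \<times> 'a \<Rightarrow> 'a \<times> 'a)" where
  "opmat2 T11 T12 T21 T22 = (\<lambda>(x, y). (T11 x + T12 y, T21 x + T22 y))"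

end

theory Submission
  imports Defs
begin

text \<open>Write \<open>S = A + B\<close> and \<open>D = A - B\<close>.  For \<open>T = [[0, A], [B, 0]]\<close> one has
  \<open>2 \<langle>T(x,y), (x,y)\<rangle> = (\<langle>Sx,y\<rangle> + \<langle>Sy,x\<rangle>) + (\<langle>Dy,x\<rangle> - \<langle>Dx,y\<rangle>)\<close>, and polarization with the
  unimodular scalars \<open>1\<close> and \<open>\<i>\<close> bounds the two brackets by \<open>w(S) (\<parallel>x\<parallel>\<^sup>2 + \<parallel>y\<parallel>\<^sup>2)\<close> and
  \<open>w(D) (\<parallel>x\<parallel>\<^sup>2 + \<parallel>y\<parallel>\<^sup>2)\<close>.  Hence \<open>w(T) \<le> (w(S) + w(D)) / 2\<close>, so the left-hand side is at
  most \<open>max (w(S)) (w(D))\<close>, which is at most \<open>w(A) + w(B)\<close> by the triangle inequality.\<close>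

lemma cinner_zero_left [simp]: "cinner (0::'a::complex_inner) y = 0"
  using cinner_add_left [of "0::'a" 0 y] by simp

lemma cinner_zero_right [simp]: "cinner (x::'a::complex_inner) 0 = 0"
  using cinner_commute [of x 0] by simp

lemma cinner_add_right: "cinner (x::'a::complex_inner) (y + z) = cinner x y + cinner x z"
  by (metis cinner_add_left cinner_commute complex_cnj_add)

lemma cinner_scaleC_right: "cinner (x::'a::complex_inner) (scaleC a y) = cnj a * cinner x y"
  by (metis cinner_scaleC_left cinner_commute complex_cnj_mult complex_cnj_cnj)

lemma scaleC_minus1_left: "scaleC (-1) (x::'a::complex_inner) = - x"
  using scaleR_scaleC [of "-1" x] by simp

lemma scaleC_minus_right: "scaleC c (- x::'a::complex_inner) = - scaleC c x"
  by (metis scaleC_minus1_left scaleC_scaleC mult.commute)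

lemma scaleC_diff_right: "scaleC c (x - y::'a::complex_inner) = scaleC c x - scaleC c y"
  by (metis diff_conv_add_uminus scaleC_add_right scaleC_minus_right)

lemma cinner_minus_left: "cinner (- x::'a::complex_inner) y = - cinner x y"
  using cinner_scaleC_left [of "-1" x y] by (simp add: scaleC_minus1_left)

lemma cinner_diff_left: "cinner (x - y::'a::complex_inner) z = cinner x z - cinner y z"
  using cinner_add_left [of x "- y" z] by (simp add: cinner_minus_left)

lemma cinner_diff_right: "cinner (x::'a::complex_inner) (y - z) = cinner x y - cinner x z"
  by (metis cinner_commute cinner_diff_left complex_cnj_diff)

lemma norm_scaleC: "norm (scaleC c (x::'a::complex_inner)) = cmod c * norm x"
proof -
  have "complex_of_real ((norm (scaleC c x))\<^sup>2) = c * cnj c * complex_of_real ((norm x)\<^sup>2)"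
    by (metis cinner_self_norm cinner_scaleC_left cinner_scaleC_right mult.assoc mult.commute)
  also have "\<dots> = complex_of_real ((cmod c * norm x)\<^sup>2)"
    by (metis complex_norm_square of_real_mult power_mult_distrib)
  finally have "(norm (scaleC c x))\<^sup>2 = (cmod c * norm x)\<^sup>2"
    by (simp only: of_real_eq_iff)
  then show ?thesis
    by (simp add: power2_eq_iff_nonneg)
qed

lemma Cauchy_Schwarz_cinner: "cmod (cinner (a::'a::complex_inner) b) \<le> norm a * norm b"
proof (cases "b = 0")
  case True
  then show ?thesis by simp
next
  case False
  define n where "n = (norm b)\<^sup>2"
  define c where "c = cinner a b"
  define t where "t = c / complex_of_real n"
  have n_pos: "n > 0"
    using False by (simp add: n_def)
  have c_cnj: "c * cnj c = complex_of_real ((cmod c)\<^sup>2)"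
    by (rule complex_norm_square [symmetric])
  have "complex_of_real ((norm (a - scaleC t b))\<^sup>2)
      = complex_of_real ((norm a)\<^sup>2) - cnj t * c - t * cnj c + t * cnj t * complex_of_real n"
    by (simp add: cinner_self_norm [symmetric] cinner_diff_left cinner_diff_right
        cinner_scaleC_left cinner_scaleC_right cinner_commute [of b a] c_def n_def algebra_simps del: of_real_power)
  also have "\<dots> = complex_of_real ((norm a)\<^sup>2 - (cmod c)\<^sup>2 / n)"
    using c_cnj n_pos by (simp add: t_def field_simps power2_eq_square)
  finally have "(cmod c)\<^sup>2 / n \<le> (norm a)\<^sup>2"
    by (metis of_real_eq_iff zero_le_power2 diff_ge_0_iff_ge)
  then have "(cmod c)\<^sup>2 \<le> (norm a * norm b)\<^sup>2"
    using n_pos by (simp add: n_def field_simps power_mult_distrib)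
  then show ?thesis
    unfolding c_def by (simp add: power2_le_iff_abs_le)
qed

lemma parallelogram_scaleC:
  fixes x y :: "'a::complex_inner"
  assumes "cmod c = 1"
  shows "(norm (x + scaleC c y))\<^sup>2 + (norm (x + scaleC (- c) y))\<^sup>2 = 2 * ((norm x)\<^sup>2 + (norm y)\<^sup>2)"
proof -
  have "c * cnj c = 1"
    using complex_norm_square [of c] assms by simp
  then have "complex_of_real ((norm (x + scaleC c y))\<^sup>2 + (norm (x + scaleC (- c) y))\<^sup>2)
      = complex_of_real (2 * ((norm x)\<^sup>2 + (norm y)\<^sup>2))"
    by (simp add: cinner_self_norm [symmetric] cinner_add_left cinner_add_right
        cinner_scaleC_left cinner_scaleC_right algebra_simps del: of_real_power)
  then show ?thesis
    by (simp only: of_real_eq_iff)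
qed

lemma bounded_op_add: "bounded_op T \<Longrightarrow> T (x + y) = T x + T y"
  unfolding bounded_op_def by blast

lemma bounded_op_scaleC: "bounded_op T \<Longrightarrow> T (scaleC c x) = scaleC c (T x)"
  unfolding bounded_op_def by blast

lemma bounded_op_zero: "bounded_op T \<Longrightarrow> T 0 = 0"
  using bounded_op_add [of T 0 0] by simp

lemma bounded_op_bound: "bounded_op T \<Longrightarrow> \<exists>K. \<forall>x. norm (T x) \<le> norm x * K"
  unfolding bounded_op_def by blast

lemma bounded_op_sum:
  assumes "bounded_op A" "bounded_op B"
  shows "bounded_op (\<lambda>x. A x + B x)"
proof -
  obtain K L where "\<And>x. norm (A x) \<le> norm x * K" "\<And>x. norm (B x) \<le> norm x * L"
    using assms by (meson bounded_op_bound)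
  then have "norm (A x + B x) \<le> norm x * (K + L)" for x
    by (smt (verit) distrib_left norm_triangle_ineq)
  with assms show ?thesis
    unfolding bounded_op_def by (auto simp: scaleC_add_right)
qed

lemma bounded_op_diff:
  assumes "bounded_op A" "bounded_op B"
  shows "bounded_op (\<lambda>x. A x - B x)"
proof -
  obtain K L where "\<And>x. norm (A x) \<le> norm x * K" "\<And>x. norm (B x) \<le> norm x * L"
    using assms by (meson bounded_op_bound)
  then have "norm (A x - B x) \<le> norm x * (K + L)" for x
    by (smt (verit) distrib_left norm_triangle_ineq4)
  with assms show ?thesis
    unfolding bounded_op_def by (auto simp: scaleC_diff_right)
qed

lemma numrad_bdd_above:
  assumes "bounded_op T"
  shows "bdd_above (insert 0 {cmod (cinner (T x) x) | x. norm x = 1})"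
proof -
  obtain K where K: "\<And>x. norm (T x) \<le> norm x * K"
    using assms by (meson bounded_op_bound)
  have "cmod (cinner (T x) x) \<le> K" if "norm x = 1" for x
    using Cauchy_Schwarz_cinner [of "T x" x] K [of x] that by simp
  then show ?thesis
    unfolding bdd_above_def by (intro exI [of _ "max 0 K"]) force
qed

lemma numrad_upper:
  assumes "bounded_op T" "norm x = 1"
  shows "cmod (cinner (T x) x) \<le> numrad T"
  unfolding numrad_def using numrad_bdd_above [OF assms(1)] assms(2)
  by (intro cSup_upper) auto

lemma numrad_nonneg: "bounded_op T \<Longrightarrow> 0 \<le> numrad T"
  unfolding numrad_def by (intro cSup_upper numrad_bdd_above) auto

lemma numrad_least:
  assumes "\<And>x. norm x = 1 \<Longrightarrow> cmod (cinner (T x) x) \<le> M" "0 \<le> M"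
  shows "numrad T \<le> M"
  unfolding numrad_def using assms by (intro cSup_least) auto

lemma cmod_cinner_le_numrad:
  assumes "bounded_op T"
  shows "cmod (cinner (T u) u) \<le> numrad T * (norm u)\<^sup>2"
proof (cases "u = 0")
  case True
  then show ?thesis
    using bounded_op_zero [OF assms] by simp
next
  case False
  define e where "e = scaleC (complex_of_real (1 / norm u)) u"
  have "norm e = 1"
    using False by (simp add: e_def norm_scaleC norm_divide)
  have u_eq: "u = scaleC (complex_of_real (norm u)) e"
    using False by (simp add: e_def scaleC_scaleC scaleC_one)
  have "cinner (T u) u = complex_of_real ((norm u)\<^sup>2) * cinner (T e) e"
    by (subst (1 2) u_eq)
      (simp add: bounded_op_scaleC [OF assms] cinner_scaleC_left cinner_scaleC_right power2_eq_square)
  then have "cmod (cinner (T u) u) = (norm u)\<^sup>2 * cmod (cinner (T e) e)"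
    by (simp only: norm_mult norm_of_real) simp
  also have "\<dots> \<le> (norm u)\<^sup>2 * numrad T"
    using numrad_upper [OF assms \<open>norm e = 1\<close>] by (simp add: mult_left_mono)
  finally show ?thesis
    by (simp add: mult.commute)
qed

lemma numrad_add_le:
  assumes "bounded_op A" "bounded_op B"
  shows "numrad (\<lambda>x. A x + B x) \<le> numrad A + numrad B"
proof (rule numrad_least)
  fix x :: 'a
  assume x: "norm x = 1"
  show "cmod (cinner (A x + B x) x) \<le> numrad A + numrad B"
    using norm_triangle_ineq [of "cinner (A x) x" "cinner (B x) x"] numrad_upper [OF assms(1) x]
      numrad_upper [OF assms(2) x] by (simp add: cinner_add_left)
qed (simp add: assms add_nonneg_nonneg numrad_nonneg)

lemma numrad_diff_le:
  assumes "bounded_op A" "bounded_op B"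
  shows "numrad (\<lambda>x. A x - B x) \<le> numrad A + numrad B"
proof (rule numrad_least)
  fix x :: 'a
  assume x: "norm x = 1"
  show "cmod (cinner (A x - B x) x) \<le> numrad A + numrad B"
    using norm_triangle_ineq4 [of "cinner (A x) x" "cinner (B x) x"] numrad_upper [OF assms(1) x]
      numrad_upper [OF assms(2) x] by (simp add: cinner_diff_left)
qed (simp add: assms add_nonneg_nonneg numrad_nonneg)

lemma numrad_polarization:
  fixes x y :: "'a::complex_inner"
  assumes "bounded_op T" "cmod c = 1"
  shows "cmod (cnj c * cinner (T x) y + c * cinner (T y) x) \<le> numrad T * ((norm x)\<^sup>2 + (norm y)\<^sup>2)"
proof -
  let ?q = "\<lambda>u. cinner (T u) u"
  have "2 * (cnj c * cinner (T x) y + c * cinner (T y) x)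
      = ?q (x + scaleC c y) - ?q (x + scaleC (- c) y)"
    by (simp add: bounded_op_add [OF assms(1)] bounded_op_scaleC [OF assms(1)] cinner_add_left
        cinner_add_right cinner_scaleC_left cinner_scaleC_right algebra_simps)
  then have "2 * cmod (cnj c * cinner (T x) y + c * cinner (T y) x)
      \<le> cmod (?q (x + scaleC c y)) + cmod (?q (x + scaleC (- c) y))"
    by (metis norm_mult norm_numeral norm_triangle_ineq4)
  also have "\<dots> \<le> numrad T * ((norm (x + scaleC c y))\<^sup>2 + (norm (x + scaleC (- c) y))\<^sup>2)"
    unfolding distrib_left by (intro add_mono cmod_cinner_le_numrad assms(1))
  also have "\<dots> = 2 * (numrad T * ((norm x)\<^sup>2 + (norm y)\<^sup>2))"
    by (subst parallelogram_scaleC [OF assms(2)]) simp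
  finally show ?thesis
    by simp
qed

lemma numrad_offdiag_le:
  fixes A B :: "'a::complex_inner \<Rightarrow> 'a"
  assumes "bounded_op A" "bounded_op B"
  shows "numrad (opmat2 (\<lambda>_. 0) A B (\<lambda>_. 0))
    \<le> (numrad (\<lambda>x. A x + B x) + numrad (\<lambda>x. A x - B x)) / 2"
proof (rule numrad_least)
  define S where "S = (\<lambda>x. A x + B x)"
  define D where "D = (\<lambda>x. A x - B x)"
  have S: "bounded_op S" and D: "bounded_op D"
    unfolding S_def D_def using assms by (simp_all add: bounded_op_sum bounded_op_diff)
  fix z :: "'a \<times> 'a"
  assume "norm z = 1"
  obtain x y where z: "z = (x, y)"
    by fastforce
  have unit: "(norm x)\<^sup>2 + (norm y)\<^sup>2 = 1"
    using \<open>norm z = 1\<close> by (simp add: z norm_prod_def)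
  have "2 * cinner (opmat2 (\<lambda>_. 0) A B (\<lambda>_. 0) z) z
      = (cnj 1 * cinner (S x) y + 1 * cinner (S y) x) + (cnj \<i> * cinner (D x) y + \<i> * cinner (D y) x) / \<i>"
    by (simp add: z opmat2_def cinner_prod_def S_def D_def cinner_add_left cinner_diff_left field_simps)
  then have "2 * cmod (cinner (opmat2 (\<lambda>_. 0) A B (\<lambda>_. 0) z) z)
      \<le> cmod (cnj 1 * cinner (S x) y + 1 * cinner (S y) x) + cmod (cnj \<i> * cinner (D x) y + \<i> * cinner (D y) x)"
    by (metis norm_divide norm_ii div_by_1 norm_mult norm_numeral norm_triangle_ineq)
  also have "\<dots> \<le> numrad S + numrad D"
    using numrad_polarization [OF S, of 1 x y] numrad_polarization [OF D, of \<i> x y] unit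
    by (intro add_mono) simp_all
  finally show "cmod (cinner (opmat2 (\<lambda>_. 0) A B (\<lambda>_. 0) z) z) \<le> (numrad S + numrad D) / 2"
    by simp
qed (simp add: assms bounded_op_sum bounded_op_diff numrad_nonneg)

theorem theorem4p14:
  fixes A B :: "'a::complex_hilbert \<Rightarrow> 'a"
  assumes "bounded_op A" and "bounded_op B"
  shows "numrad (opmat2 (\<lambda>_. 0) A B (\<lambda>_. 0))
           + \<bar>numrad (\<lambda>x. A x + B x) - numrad (\<lambda>x. A x - B x)\<bar> / 2
         \<le> numrad A + numrad B"
proof -
  have "numrad (opmat2 (\<lambda>_. 0) A B (\<lambda>_. 0))
      + \<bar>numrad (\<lambda>x. A x + B x) - numrad (\<lambda>x. A x - B x)\<bar> / 2
      \<le> max (numrad (\<lambda>x. A x + B x)) (numrad (\<lambda>x. A x - B x))"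
    using numrad_offdiag_le [OF assms] by (auto simp: max_def abs_if field_simps)
  also have "\<dots> \<le> numrad A + numrad B"
    using numrad_add_le [OF assms] numrad_diff_le [OF assms] by simp
  finally show ?thesis .
qed

end
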